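(* Let $(\mathcal G,k)$ be a quadratic Lie algebra, $f$ a linear endomorphism of $\mathcal G$ with $f([x,y])-[f(x),f(y)]\in\mathcal Z(\mathcal G)$ for all $x,y$, and $d$ an invertible linear endomorphism of $\mathcal G$ with $d[x,y]=[dx,fy]+[fx,dy]$ for all $x,y\in\mathcal G$. Then the left invariant semi-Riemannian metric on any connected Lie group with Lie algebra $\mathcal G$ defined by $\langle x,y\rangle=k(dx,dy)$ is flat, and its Levi-Civita product is $xy=d^{-1}[fx,dy]$.
   Context: A quadratic Lie algebra $(\mathcal G,k)$ is a real Lie algebra with a nondegenerate symmetric bilinear form $k$ such that each $\mathrm{ad}_x$ is $k$-skew-symmetric. $\mathcal Z(\mathcal G)$ is the center. The Levi-Civita product is the bilinear product on $\mathcal G$ given by $(xy)^+=\nabla_{x^+}y^+$ for the Levi-Civita connection $\nabla$ and left invariant vector fields $x^+$; it is characterized by the Koszul formula $2\langle xy,z\rangle=\langle[x,y],z\rangle-\langle[y,z],x\rangle+\langle[z,x],y\rangle$. *)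

theory Defs
  imports "HOL-Analysis.Analysis"
begin

definition lie_algebra :: "('a::euclidean_space \<Rightarrow> 'a \<Rightarrow> 'a) \<Rightarrow> bool" where
  "lie_algebra br \<longleftrightarrow> bilinear br \<and> (\<forall>x. br x x = 0) \<and>
     (\<forall>x y z. br x (br y z) + br y (br z x) + br z (br x y) = 0)"

definition quadratic_lie_algebra ::
  "('a::euclidean_space \<Rightarrow> 'a \<Rightarrow> 'a) \<Rightarrow> ('a \<Rightarrow> 'a \<Rightarrow> real) \<Rightarrow> bool" where
  "quadratic_lie_algebra br k \<longleftrightarrow> lie_algebra br \<and> bilinear k \<and>
     (\<forall>x y. k x y = k y x) \<and> (\<forall>x. (\<forall>y. k x y = 0) \<longrightarrow> x = 0) \<and>
     (\<forall>x y z. k (br x y) z + k y (br x z) = 0)"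

definition lie_center :: "('a::euclidean_space \<Rightarrow> 'a \<Rightarrow> 'a) \<Rightarrow> 'a set" where
  "lie_center br = {z. \<forall>x. br z x = 0}"

text \<open>Levi-Civita product of the left-invariant metric g on the Lie algebra,
  characterized by the Koszul formula.\<close>
definition levi_civita_product ::
  "('a::euclidean_space \<Rightarrow> 'a \<Rightarrow> 'a) \<Rightarrow> ('a \<Rightarrow> 'a \<Rightarrow> real) \<Rightarrow> 'a \<Rightarrow> 'a \<Rightarrow> 'a" where
  "levi_civita_product br g x y =
     (THE w. \<forall>z. 2 * g w z = g (br x y) z - g (br y z) x + g (br z x) y)"

definition left_invariant_flat ::
  "('a::euclidean_space \<Rightarrow> 'a \<Rightarrow> 'a) \<Rightarrow> ('a \<Rightarrow> 'a \<Rightarrow> real) \<Rightarrow> bool" where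
  "left_invariant_flat br g \<longleftrightarrow>
     (\<forall>x y z. levi_civita_product br g x (levi_civita_product br g y z)
            - levi_civita_product br g y (levi_civita_product br g x z)
            - levi_civita_product br g (br x y) z = 0)"

end

theory Submission
  imports Defs
begin

(* Write g x y = k (d x) (d y) and P x y = d\<inverse>[f x, d y].
   (1) Using the invariance of k in its cyclic form k([a,b],c) = k([b,c],a) and the
       twisted derivation rule d[x,y] = [dx,fy] + [fx,dy], the right-hand side of the
       Koszul formula for g collapses to 2 k([fx,dy],dz) = 2 g(P x y, z).
   (2) Since g is a nondegenerate bilinear form (a pullback of k along the linear
       bijection d), the Koszul formula has a unique solution, so the Levi-Civita
       product is P.
   (3) P x = d\<inverse> \<circ> ad(f x) \<circ> d, so the curvature P x P y - P y P x - P [x,y] is the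
       conjugate by d of [ad fx, ad fy] - ad f[x,y]; by the Jacobi identity this is
       ad([fx,fy] - f[x,y]), which vanishes because f is a homomorphism modulo the
       centre. *)

lemma lie_algebra_antisym:
  assumes "lie_algebra br"
  shows "br y x = - br x y"
proof -
  have b: "bilinear br" and alt: "\<And>x. br x x = 0"
    using assms by (auto simp: lie_algebra_def)
  have "0 = br (x + y) (x + y)" using alt by simp
  also have "\<dots> = br x x + br x y + br y x + br y y"
    using b by (simp add: bilinear_ladd bilinear_radd)
  finally show ?thesis using alt by (simp add: eq_neg_iff_add_eq_0 add.commute)
qed

lemma lie_algebra_ad_bracket:
  assumes "lie_algebra br"
  shows "br a (br b c) - br b (br a c) - br (br a b) c = 0"
proof -
  have b: "bilinear br" and jacobi: "br a (br b c) + br b (br c a) + br c (br a b) = 0"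
    using assms by (auto simp: lie_algebra_def)
  have "br b (br c a) = - br b (br a c)"
    using lie_algebra_antisym[OF assms, of a c] b by (simp add: bilinear_rneg)
  moreover have "br c (br a b) = - br (br a b) c"
    using lie_algebra_antisym[OF assms, of "br a b" c] by simp
  ultimately show ?thesis using jacobi by (simp add: algebra_simps)
qed

lemma ad_eq_mod_center:
  assumes "bilinear br" and "a - b \<in> lie_center br"
  shows "br a c = br b c"
proof -
  have "br (a - b) c = 0" using assms(2) unfolding lie_center_def by blast
  thus ?thesis using assms(1) by (simp add: bilinear_lsub)
qed

lemma quadratic_cyclic:
  assumes "quadratic_lie_algebra br k"
  shows "k (br a b) c = k (br b c) a"
proof -
  have la: "lie_algebra br" and bk: "bilinear k" and sym: "\<And>x y. k x y = k y x"
    and inv: "\<And>x y z. k (br x y) z + k y (br x z) = 0"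
    using assms by (auto simp: quadratic_lie_algebra_def)
  have "k (br b c) a = - k c (br b a)" using inv[of b c a] by simp
  also have "\<dots> = k c (br a b)"
    using lie_algebra_antisym[OF la, of a b] bk by (simp add: bilinear_rneg)
  also have "\<dots> = k (br a b) c" using sym by simp
  finally show ?thesis by simp
qed

lemma levi_civita_product_eqI:
  assumes bg: "bilinear g"
    and nondeg: "\<And>w. (\<forall>z. g w z = 0) \<Longrightarrow> w = 0"
    and koszul: "\<And>z. 2 * g p z = g (br x y) z - g (br y z) x + g (br z x) y"
  shows "levi_civita_product br g x y = p"
  unfolding levi_civita_product_def
proof (rule the_equality)
  show "\<forall>z. 2 * g p z = g (br x y) z - g (br y z) x + g (br z x) y"
    using koszul by blast
next
  fix w assume w: "\<forall>z. 2 * g w z = g (br x y) z - g (br y z) x + g (br z x) y"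
  have "g (w - p) z = 0" for z
    using w[rule_format, of z] koszul[of z] bg by (simp add: bilinear_lsub)
  hence "w - p = 0" by (rule nondeg[rule_format])
  thus "w = p" by simp
qed

lemma pullback_bilinear:
  assumes "bilinear k" and "linear d"
  shows "bilinear (\<lambda>x y. k (d x) (d y))"
  using assms unfolding bilinear_def by (auto intro: linear_compose[unfolded o_def])

text \<open>The pullback of a nondegenerate form along a bijection is nondegenerate; this
  is what makes the Koszul formula for the metric k(d x, d y) uniquely solvable.\<close>
lemma pullback_nondegenerate:
  assumes nondeg: "\<And>x. (\<forall>y. k x y = 0) \<Longrightarrow> x = 0"
    and "linear d" and "bij d"
    and w: "\<forall>z. k (d w) (d z) = 0"
  shows "w = 0"
proof -
  have "\<forall>u. k (d w) u = 0"
    using w \<open>bij d\<close> by (metis bij_pointE)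
  hence "d w = 0" by (rule nondeg)
  thus "w = 0"
    using \<open>linear d\<close> \<open>bij d\<close> by (metis bij_is_inj linear_0 injD)
qed

lemma koszul_twisted_derivation:
  assumes q: "quadratic_lie_algebra br k"
    and der: "\<And>a b. d (br a b) = br (d a) (f b) + br (f a) (d b)"
  shows "k (d (br x y)) (d z) - k (d (br y z)) (d x) + k (d (br z x)) (d y)
         = 2 * k (br (f x) (d y)) (d z)"
proof -
  have bk: "bilinear k" using q by (simp add: quadratic_lie_algebra_def)
  have "k (d (br x y)) (d z) - k (d (br y z)) (d x) + k (d (br z x)) (d y)
      = k (br (d x) (f y)) (d z) + k (br (f x) (d y)) (d z)
        - (k (br (d y) (f z)) (d x) + k (br (f y) (d z)) (d x))
        + (k (br (d z) (f x)) (d y) + k (br (f z) (d x)) (d y))"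
    unfolding der using bk by (simp add: bilinear_ladd)
  also have "\<dots> = 2 * k (br (f x) (d y)) (d z)"
    using quadratic_cyclic[OF q, of "d x" "f y" "d z"] quadratic_cyclic[OF q, of "d y" "f z" "d x"]
      quadratic_cyclic[OF q, of "d z" "f x" "d y"] by simp
  finally show ?thesis .
qed

text \<open>The product x y = e[fx, dy], with e a linear right inverse of d, is flat
  whenever f preserves brackets modulo the centre: its curvature is the conjugate of
  ad([fx,fy] - f[x,y]) = 0.\<close>
lemma twisted_product_flat:
  assumes la: "lie_algebra br"
    and hom: "\<And>x y. f (br x y) - br (f x) (f y) \<in> lie_center br"
    and "linear e" and right_inv: "\<And>u. d (e u) = u"
  defines "P \<equiv> \<lambda>x y. e (br (f x) (d y))"
  shows "P x (P y z) - P y (P x z) - P (br x y) z = 0"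
proof -
  have "br (f (br x y)) (d z) = br (br (f x) (f y)) (d z)"
    using la hom by (intro ad_eq_mod_center) (auto simp: lie_algebra_def)
  hence "P x (P y z) - P y (P x z) - P (br x y) z
       = e (br (f x) (br (f y) (d z)) - br (f y) (br (f x) (d z)) - br (br (f x) (f y)) (d z))"
    unfolding P_def right_inv using \<open>linear e\<close> by (simp add: linear_diff)
  also have "\<dots> = 0"
    using lie_algebra_ad_bracket[OF la] \<open>linear e\<close> by (simp add: linear_0)
  finally show ?thesis .
qed

theorem mainTheorem15:
  fixes br :: "'a::euclidean_space \<Rightarrow> 'a \<Rightarrow> 'a"
    and k :: "'a \<Rightarrow> 'a \<Rightarrow> real"
    and f d :: "'a \<Rightarrow> 'a"
  assumes "quadratic_lie_algebra br k"
    and "linear f"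
    and "\<forall>x y. f (br x y) - br (f x) (f y) \<in> lie_center br"
    and "linear d" and "bij d"
    and "\<forall>x y. d (br x y) = br (d x) (f y) + br (f x) (d y)"
  shows "left_invariant_flat br (\<lambda>x y. k (d x) (d y)) \<and>
         (\<forall>x y. levi_civita_product br (\<lambda>x y. k (d x) (d y)) x y = inv d (br (f x) (d y)))"
proof -
  define g where "g = (\<lambda>x y. k (d x) (d y))"
  have q: "quadratic_lie_algebra br k" by fact
  have right_inv: "d (inv d u) = u" for u
    using \<open>bij d\<close> by (simp add: bij_is_surj surj_f_inv_f)
  have linear_inv: "linear (inv d)"
    using \<open>linear d\<close> \<open>bij d\<close> bij_is_inj inj_linear_imp_inv_linear by blast
  have product: "levi_civita_product br g x y = inv d (br (f x) (d y))" for x y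
  proof (rule levi_civita_product_eqI)
    show "bilinear g"
      unfolding g_def using q \<open>linear d\<close> by (simp add: pullback_bilinear quadratic_lie_algebra_def)
    show "w = 0" if "\<forall>z. g w z = 0" for w
      using that q \<open>linear d\<close> \<open>bij d\<close> pullback_nondegenerate[of k d w]
      unfolding g_def quadratic_lie_algebra_def by blast
    show "2 * g (inv d (br (f x) (d y))) z = g (br x y) z - g (br y z) x + g (br z x) y" for z
      unfolding g_def right_inv using koszul_twisted_derivation[OF q] assms(6) by simp
  qed
  have "left_invariant_flat br g"
    unfolding left_invariant_flat_def product
    using twisted_product_flat[OF _ _ linear_inv right_inv] q assms(3)
    by (simp add: quadratic_lie_algebra_def)
  thus ?thesis using product unfolding g_def by simp
qed

end
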